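(* Let $\theta\in(0,\pi/2)$ and $|\psi_1\rangle=\cos\theta|00\rangle+\sin\theta|11\rangle$. Then there exist unit vectors $\hat a_1,\hat a_2,\hat a_3\in\mathbb R^3$ and an orthonormal triple $\hat b_1,\hat b_2,\hat b_3\in\mathbb R^3$ such that $\frac13\sum_{k=1}^3\langle\psi_1|(\hat a_k\cdot\vec\sigma)\otimes(\hat b_k\cdot\vec\sigma)|\psi_1\rangle=\frac{2+\sqrt{1+2\sin^2 2\theta}}{3\sqrt3}>\frac1{\sqrt3}.$
   Context: $\vec\sigma=(\sigma_x,\sigma_y,\sigma_z)$ is the vector of Pauli matrices; the first tensor factor is Alice's qubit, the second Bob's; $\{|0\rangle,|1\rangle\}$ is the computational basis. The number $1/\sqrt3$ is the local-hidden-state bound of the 3-setting linear steering inequality $\frac13\sum_{k=1}^3\langle A_k(\hat b_k\cdot\vec\sigma^B)\rangle\le\frac1{\sqrt3}$ with mutually orthogonal $\hat b_k$. *)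

theory Defs
  imports "HOL-Analysis.Analysis"
begin

text \<open>Complex matrices as functions on indices (2x2 for one qubit, 4x4 for two qubits).
  Computational basis: one qubit index 0,1 for |0>,|1>; two-qubit index 2*a+b for |ab>,
  first factor = Alice.\<close>

type_synonym cmat = "nat \<Rightarrow> nat \<Rightarrow> complex"
type_synonym cvec = "nat \<Rightarrow> complex"

definition pauli_x :: cmat where
  "pauli_x i j = (if i = 0 \<and> j = 1 then 1 else if i = 1 \<and> j = 0 then 1 else 0)"

definition pauli_y :: cmat where
  "pauli_y i j = (if i = 0 \<and> j = 1 then -\<i> else if i = 1 \<and> j = 0 then \<i> else 0)"

definition pauli_z :: cmat where
  "pauli_z i j = (if i = 0 \<and> j = 0 then 1 else if i = 1 \<and> j = 1 then -1 else 0)"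

definition sigma_dot :: "real^3 \<Rightarrow> cmat" where
  "sigma_dot n i j = of_real (n $ 1) * pauli_x i j + of_real (n $ 2) * pauli_y i j
                      + of_real (n $ 3) * pauli_z i j"

definition kron2 :: "cmat \<Rightarrow> cmat \<Rightarrow> cmat" where
  "kron2 A B i j = A (i div 2) (j div 2) * B (i mod 2) (j mod 2)"

definition expect4 :: "cvec \<Rightarrow> cmat \<Rightarrow> complex" where
  "expect4 \<psi> M = (\<Sum>i<4. \<Sum>j<4. cnj (\<psi> i) * M i j * \<psi> j)"

definition psi1 :: "real \<Rightarrow> cvec" where
  "psi1 \<theta> i = (if i = 0 then of_real (cos \<theta>) else if i = 3 then of_real (sin \<theta>) else 0)"

end

theory Submission
  imports Defs
begin

text \<open>In the state \<open>cos \<theta>|00> + sin \<theta>|11>\<close> the correlation matrix \<open>\<langle>\<sigma>\<^sub>i \<otimes> \<sigma>\<^sub>j\<rangle>\<close> is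
  \<open>T = diag(s, -s, 1)\<close> with \<open>s = sin 2\<theta>\<close>, so the \<open>k\<close>-th term of the steering sum is
  \<open>a\<^sub>k \<bullet> T b\<^sub>k\<close>. Take for \<open>b\<^sub>k\<close> an orthonormal basis whose vectors all have \<open>z\<close>-component
  \<open>1/\<surd>3\<close>, with \<open>b\<^sub>1\<close> in the \<open>xz\<close>-plane. Alice measures along \<open>T b\<^sub>1\<close> for \<open>k = 1\<close>, contributing
  \<open>|T b\<^sub>1| = \<surd>(1 + 2s\<^sup>2)/\<surd>3\<close>, and along \<open>z\<close> for \<open>k = 2, 3\<close>, contributing \<open>1/\<surd>3\<close> each.
  Since \<open>s > 0\<close>, the total exceeds the local-hidden-state bound \<open>1/\<surd>3\<close>.\<close>

lemma inner_vec3: "(x::real^3) \<bullet> y = x$1 * y$1 + x$2 * y$2 + x$3 * y$3"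
  by (simp add: inner_vec_def sum_3)

lemma inner_sgn_self: "sgn x \<bullet> x = norm (x::'a::real_inner)"
  by (cases "x = 0") (simp_all add: sgn_div_norm power2_norm_eq_inner [symmetric] power2_eq_square)

definition psi1_correlation :: "real \<Rightarrow> real^3 \<Rightarrow> real^3" where
  "psi1_correlation \<theta> b = vector [sin (2*\<theta>) * b$1, - (sin (2*\<theta>) * b$2), b$3]"

lemma psi1_correlation_z: "psi1_correlation \<theta> b $ 3 = b $ 3"
  by (simp add: psi1_correlation_def)

lemma expect4_psi1_kron2:
  "expect4 (psi1 \<theta>) M = of_real (cos \<theta>)^2 * M 0 0 + of_real (sin \<theta>)^2 * M 3 3
     + of_real (cos \<theta> * sin \<theta>) * (M 0 3 + M 3 0)"
  unfolding expect4_def psi1_def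
  by (simp add: numeral_eq_Suc lessThan_Suc algebra_simps power2_eq_square)

lemma expect4_psi1_sigma_dot:
  "expect4 (psi1 \<theta>) (kron2 (sigma_dot a) (sigma_dot b)) = of_real (a \<bullet> psi1_correlation \<theta> b)"
proof -
  have "expect4 (psi1 \<theta>) (kron2 (sigma_dot a) (sigma_dot b))
      = of_real ((cos \<theta>)^2 * (a$3 * b$3) + (sin \<theta>)^2 * (a$3 * b$3)
                 + 2 * sin \<theta> * cos \<theta> * (a$1 * b$1 - a$2 * b$2))"
    unfolding expect4_psi1_kron2 kron2_def sigma_dot_def pauli_x_def pauli_y_def pauli_z_def
    by (simp add: algebra_simps power2_eq_square)
  also have "\<dots> = of_real (a$3 * b$3 + sin (2*\<theta>) * (a$1 * b$1 - a$2 * b$2))"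
    by (simp only: sin_double sin_cos_squared_add2 mult_1 flip: distrib_right)
  finally show ?thesis
    by (simp add: psi1_correlation_def inner_vec3 right_diff_distrib)
qed

definition equiangular_basis :: "nat \<Rightarrow> real^3" where
  "equiangular_basis k =
     (if k = 1 then vector [sqrt 2 / sqrt 3, 0, 1 / sqrt 3]
      else if k = 2 then vector [-1 / (sqrt 2 * sqrt 3), 1 / sqrt 2, 1 / sqrt 3]
      else vector [-1 / (sqrt 2 * sqrt 3), -1 / sqrt 2, 1 / sqrt 3])"

lemma equiangular_basis_orthonormal:
  assumes "k \<in> {1..3}" and "l \<in> {1..3}"
  shows "equiangular_basis k \<bullet> equiangular_basis l = (if k = l then 1 else 0)"
proof -
  from assms have "k \<in> {1, 2, 3}" "l \<in> {1, 2, 3}" by auto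
  then show ?thesis
    unfolding equiangular_basis_def inner_vec3 by (auto simp: field_simps)
qed

lemma equiangular_basis_z: "equiangular_basis k $ 3 = 1 / sqrt 3"
  by (simp add: equiangular_basis_def)

lemma norm_psi1_correlation_equiangular_basis_1:
  "norm (psi1_correlation \<theta> (equiangular_basis 1)) = sqrt (1 + 2 * (sin (2*\<theta>))^2) / sqrt 3"
proof -
  have "norm (psi1_correlation \<theta> (equiangular_basis 1)) = sqrt ((1 + 2 * (sin (2*\<theta>))^2) / 3)"
    by (simp add: norm_eq_sqrt_inner inner_vec3 psi1_correlation_def equiangular_basis_def
        power2_eq_square field_simps)
  then show ?thesis
    by (simp add: real_sqrt_divide)
qed

definition steering_directions :: "real \<Rightarrow> nat \<Rightarrow> real^3" where
  "steering_directions \<theta> k =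
     (if k = 1 then sgn (psi1_correlation \<theta> (equiangular_basis 1)) else axis 3 1)"

lemma norm_steering_directions: "norm (steering_directions \<theta> k) = 1"
proof -
  have "psi1_correlation \<theta> (equiangular_basis 1) $ 3 \<noteq> 0"
    by (simp add: psi1_correlation_z equiangular_basis_z)
  then have "psi1_correlation \<theta> (equiangular_basis 1) \<noteq> 0"
    by auto
  then show ?thesis
    by (simp add: steering_directions_def norm_sgn)
qed

lemma psi1_steering_sum:
  "(1/3) * (\<Sum>k=1..3. expect4 (psi1 \<theta>)
       (kron2 (sigma_dot (steering_directions \<theta> k)) (sigma_dot (equiangular_basis k))))
     = of_real ((2 + sqrt (1 + 2 * (sin (2*\<theta>))^2)) / (3 * sqrt 3))"
proof -
  have sum_1_3: "(\<Sum>k=1..3. f k) = f 1 + f 2 + f (3::nat)" for f :: "nat \<Rightarrow> complex"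
    by (simp add: numeral_eq_Suc)
  have term1: "steering_directions \<theta> 1 \<bullet> psi1_correlation \<theta> (equiangular_basis 1)
      = sqrt (1 + 2 * (sin (2*\<theta>))^2) / sqrt 3"
    unfolding steering_directions_def
    by (simp only: if_P [OF refl] inner_sgn_self norm_psi1_correlation_equiangular_basis_1)
  have term23: "steering_directions \<theta> 2 \<bullet> psi1_correlation \<theta> (equiangular_basis 2) = 1 / sqrt 3"
    "steering_directions \<theta> 3 \<bullet> psi1_correlation \<theta> (equiangular_basis 3) = 1 / sqrt 3"
    by (simp_all add: steering_directions_def inner_axis' psi1_correlation_z equiangular_basis_z)
  show ?thesis
    unfolding sum_1_3 expect4_psi1_sigma_dot term1 term23
    by (simp add: field_simps)
qed

theorem mainTheorem8:
  fixes \<theta> :: real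
  assumes "0 < \<theta>" and "\<theta> < pi / 2"
  shows "\<exists>a b :: nat \<Rightarrow> real^3.
           (\<forall>k\<in>{1..3}. norm (a k) = 1) \<and>
           (\<forall>k\<in>{1..3}. \<forall>l\<in>{1..3}. b k \<bullet> b l = (if k = l then 1 else 0)) \<and>
           (1/3) * (\<Sum>k=1..3. expect4 (psi1 \<theta>) (kron2 (sigma_dot (a k)) (sigma_dot (b k))))
             = complex_of_real ((2 + sqrt (1 + 2 * (sin (2 * \<theta>))^2)) / (3 * sqrt 3)) \<and>
           (2 + sqrt (1 + 2 * (sin (2 * \<theta>))^2)) / (3 * sqrt 3) > 1 / sqrt 3"
proof -
  have "sin (2 * \<theta>) > 0"
    using assms by (intro sin_gt_zero) auto
  then have "sqrt (1 + 2 * (sin (2 * \<theta>))^2) > 1"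
    by (simp add: real_less_rsqrt)
  then have "(2 + sqrt (1 + 2 * (sin (2 * \<theta>))^2)) / (3 * sqrt 3) > 1 / sqrt 3"
    by (simp add: field_simps)
  then show ?thesis
    using norm_steering_directions equiangular_basis_orthonormal psi1_steering_sum by blast
qed

end
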